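(* Let $\lambda\ge 1$, $n$, $0<R\le\sqrt n$, $m=\lceil\sqrt{5n}/R\rceil$, and partition $[0,\sqrt n]^2$ into $m\times m$ congruent square cells. Let $n$ nodes be placed at points of the square such that every cell contains at least $R^2/\lambda$ and at most $\lambda R^2$ nodes, and let $G$ be the graph on the nodes joining two nodes iff their Euclidean distance is at most $R$. Then, with $\alpha=1/(2\lambda)$, $G$ is an $(h,\alpha R^2/h)$-expander for every $1\le h\le\alpha R^2$.
   Context: For a graph $G$ on $[n]$ and $I\subseteq[n]$, $N(I)$ is the set of nodes outside $I$ adjacent to some node of $I$. $G$ is an $(h,k)$-expander if every $I$ with $|I|\le h$ satisfies $|N(I)|\ge k|I|$. Each node belongs to exactly one cell. *)

theory Defs
  imports "HOL-Analysis.Analysis"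
begin

definition nbhd :: "(nat \<Rightarrow> nat \<Rightarrow> bool) \<Rightarrow> nat \<Rightarrow> nat set \<Rightarrow> nat set" where
  "nbhd adj n I = {v \<in> {0..<n} - I. \<exists>u\<in>I. adj u v}"

definition is_expander :: "(nat \<Rightarrow> nat \<Rightarrow> bool) \<Rightarrow> nat \<Rightarrow> real \<Rightarrow> real \<Rightarrow> bool" where
  "is_expander adj n h k \<longleftrightarrow>
     (\<forall>I. I \<subseteq> {0..<n} \<longrightarrow> real (card I) \<le> h \<longrightarrow> real (card (nbhd adj n I)) \<ge> k * real (card I))"

definition disk_graph :: "(nat \<Rightarrow> real \<times> real) \<Rightarrow> real \<Rightarrow> nat \<Rightarrow> nat \<Rightarrow> bool" where
  "disk_graph pos R u v \<longleftrightarrow> u \<noteq> v \<and> dist (pos u) (pos v) \<le> R"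

text \<open>Grid of m x m congruent square cells of side L/m partitioning [0,L]^2.
  Cell (i,j), i,j < m, is [i s, (i+1) s) x [j s, (j+1) s), where the last row/column
  of cells is closed on the right/top, so that every point belongs to exactly one cell.\<close>
definition cell_index :: "real \<Rightarrow> nat \<Rightarrow> real \<Rightarrow> nat" where
  "cell_index L m x = min (m - 1) (nat \<lfloor>x / (L / real m)\<rfloor>)"

definition cell_of :: "real \<Rightarrow> nat \<Rightarrow> real \<times> real \<Rightarrow> nat \<times> nat" where
  "cell_of L m p = (cell_index L m (fst p), cell_index L m (snd p))"

definition cell_nodes :: "(nat \<Rightarrow> real \<times> real) \<Rightarrow> nat \<Rightarrow> nat \<Rightarrow> nat \<times> nat \<Rightarrow> nat set" where
  "cell_nodes pos n m c = {v \<in> {0..<n}. cell_of (sqrt (real n)) m (pos v) = c}"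

end

theory Submission
  imports Defs
begin

(* Let L = sqrt n be the side of the square and s = L/m the side of a cell.
   The choice m = ceil(sqrt(5n)/R) makes the cell diagonal sqrt 2 * s at most R, so any two
   nodes lying in the same cell are adjacent in the disk graph.  Given a nonempty node set I,
   pick u in I and let C be the cell of u: every node of C outside I is a neighbour of I,
   hence |N(I)| >= |C| - |I| >= R^2/lam - |I|.  For |I| <= h <= R^2/(2 lam) this is at least
   R^2/(2 lam) >= (R^2/(2 lam)) / h * |I|, which is the claimed expansion. *)

text \<open>A coordinate in [0,L] lies between its cell index and the next one, in units of the
  cell side L/m; the last cell is closed, which is why only the weak upper bound holds.\<close>
lemma cell_index_bounds:
  fixes L x :: real and m :: nat
  assumes "L > 0" "m \<ge> 1" "0 \<le> x" "x \<le> L"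
  shows "real (cell_index L m x) \<le> x / (L / real m)"
    and "x / (L / real m) \<le> real (cell_index L m x) + 1"
proof -
  define s where "s = L / real m"
  have s: "s > 0" using assms unfolding s_def by simp
  have upper: "x / s \<le> real m" using s assms unfolding s_def by (simp add: field_simps)
  have floor: "real (nat \<lfloor>x / s\<rfloor>) \<le> x / s" "x / s < real (nat \<lfloor>x / s\<rfloor>) + 1"
    using s assms(3) by (simp_all add: of_nat_nat)
  have "real (cell_index L m x) \<le> x / s \<and> x / s \<le> real (cell_index L m x) + 1"
  proof (cases "nat \<lfloor>x / s\<rfloor> \<le> m - 1")
    case True
    then have "cell_index L m x = nat \<lfloor>x / s\<rfloor>" unfolding cell_index_def s_def by simp
    then show ?thesis using floor by simp
  next
    case False
    then have "cell_index L m x = m - 1" unfolding cell_index_def s_def by simp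
    moreover have "real m - 1 \<le> x / s" using False floor assms(2) by linarith
    ultimately show ?thesis using upper assms(2) by (simp add: of_nat_diff)
  qed
  then show "real (cell_index L m x) \<le> x / (L / real m)"
    and "x / (L / real m) \<le> real (cell_index L m x) + 1"
    unfolding s_def by auto
qed

lemma same_cell_index_close:
  fixes L x y :: real and m :: nat
  assumes "L > 0" "m \<ge> 1" "0 \<le> x" "x \<le> L" "0 \<le> y" "y \<le> L"
    and "cell_index L m x = cell_index L m y"
  shows "\<bar>x - y\<bar> \<le> L / real m"
proof -
  define s where "s = L / real m"
  have s: "s > 0" using assms unfolding s_def by simp
  have "\<bar>x / s - y / s\<bar> \<le> 1"
    using cell_index_bounds[OF assms(1-4)] cell_index_bounds[OF assms(1,2,5,6)] assms(7)
    unfolding s_def by linarith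
  then have "\<bar>x - y\<bar> / s \<le> 1" using s by (simp add: diff_divide_distrib[symmetric] abs_divide)
  then have "\<bar>x - y\<bar> \<le> s" using s by (simp add: divide_le_eq)
  then show ?thesis unfolding s_def .
qed

lemma same_cell_dist:
  fixes L :: real and m :: nat and p q :: "real \<times> real"
  assumes "L > 0" "m \<ge> 1"
    and "fst p \<in> {0..L}" "snd p \<in> {0..L}" "fst q \<in> {0..L}" "snd q \<in> {0..L}"
    and "cell_of L m p = cell_of L m q"
  shows "dist p q \<le> sqrt 2 * (L / real m)"
proof -
  define s where "s = L / real m"
  have dx: "\<bar>fst p - fst q\<bar> \<le> s" and dy: "\<bar>snd p - snd q\<bar> \<le> s"
    using same_cell_index_close[OF assms(1,2)] assms(3-7) unfolding cell_of_def s_def by auto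
  have "(fst p - fst q)\<^sup>2 \<le> s\<^sup>2" "(snd p - snd q)\<^sup>2 \<le> s\<^sup>2"
    using power_mono[OF dx, of 2] power_mono[OF dy, of 2] by simp_all
  then have "dist p q \<le> sqrt (2 * s\<^sup>2)"
    unfolding dist_prod_def dist_real_def by (intro real_sqrt_le_mono) simp
  also have "\<dots> = sqrt 2 * s"
    using assms unfolding s_def by (simp add: real_sqrt_mult)
  finally show ?thesis unfolding s_def .
qed

lemma disk_graph_same_cell:
  fixes L R :: real and m :: nat and pos :: "nat \<Rightarrow> real \<times> real"
  assumes "L > 0" "m \<ge> 1" "sqrt 2 * (L / real m) \<le> R"
    and "fst (pos u) \<in> {0..L}" "snd (pos u) \<in> {0..L}"
    and "fst (pos v) \<in> {0..L}" "snd (pos v) \<in> {0..L}"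
    and "cell_of L m (pos u) = cell_of L m (pos v)" "u \<noteq> v"
  shows "disk_graph pos R u v"
  using same_cell_dist[OF assms(1,2,4-8)] assms(3,9) unfolding disk_graph_def by simp

lemma grid_resolution:
  fixes L R :: real and m :: nat
  assumes "L > 0" "R > 0" "m = nat \<lceil>sqrt 5 * L / R\<rceil>"
  shows "m \<ge> 1" and "sqrt 2 * (L / real m) \<le> R"
proof -
  have ratio_pos: "sqrt 5 * L / R > 0" using assms by simp
  then have m_ge: "real m \<ge> sqrt 5 * L / R"
    using assms(3) by (simp add: le_of_int_ceiling)
  then show "m \<ge> 1" using ratio_pos by simp
  have "sqrt 2 * L \<le> sqrt 5 * L" using assms(1) by simp
  also have "\<dots> \<le> real m * R" using m_ge assms(2) by (simp add: divide_le_eq)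
  finally show "sqrt 2 * (L / real m) \<le> R"
    using \<open>m \<ge> 1\<close> by (simp add: divide_le_eq mult.commute)
qed

lemma nbhd_card_ge_cell:
  fixes adj :: "nat \<Rightarrow> nat \<Rightarrow> bool"
  assumes "I \<subseteq> {0..<n}" "u \<in> I" "C \<subseteq> {0..<n}"
    and "\<forall>v\<in>C. v \<noteq> u \<longrightarrow> adj u v"
  shows "real (card C) - real (card I) \<le> real (card (nbhd adj n I))"
proof -
  have "C - I \<subseteq> nbhd adj n I"
    using assms unfolding nbhd_def by fastforce
  then have "card (C - I) \<le> card (nbhd adj n I)"
    by (intro card_mono) (auto simp: nbhd_def)
  moreover have "card C - card I \<le> card (C - I)"
    using assms(1) finite_subset by (intro diff_card_le_card_Diff) auto
  ultimately show ?thesis by linarith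
qed

lemma expansion_from_deficit:
  fixes k h c N :: real
  assumes "2 * k - c \<le> N" "c \<le> h" "0 < h" "h \<le> k"
  shows "k / h * c \<le> N"
proof -
  have "k / h * c \<le> k / h * h"
    using assms by (intro mult_left_mono) auto
  also have "\<dots> = k" using assms(3) by simp
  finally show ?thesis using assms by linarith
qed

text \<open>The key estimate: if every cell of the grid contains at least D nodes and the cell
  diagonal is at most R, then every nonempty node set I satisfies |N(I)| >= D - |I|,
  because all nodes in the cell of any member of I are adjacent to it.\<close>
lemma dense_cells_nbhd_bound:
  fixes R D :: real and n m :: nat and pos :: "nat \<Rightarrow> real \<times> real"
  defines "L \<equiv> sqrt (real n)"
  assumes "L > 0" "m \<ge> 1" "sqrt 2 * (L / real m) \<le> R"
    and "\<forall>v<n. fst (pos v) \<in> {0..L} \<and> snd (pos v) \<in> {0..L}"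
    and "\<forall>i<m. \<forall>j<m. D \<le> real (card (cell_nodes pos n m (i, j)))"
    and "I \<subseteq> {0..<n}" "I \<noteq> {}"
  shows "D - real (card I) \<le> real (card (nbhd (disk_graph pos R) n I))"
proof -
  obtain u where u: "u \<in> I" using assms(8) by blast
  obtain i j where cell_u: "cell_of L m (pos u) = (i, j)" by fastforce
  then have "i < m" "j < m" using assms(3) unfolding cell_of_def cell_index_def by auto
  then have "D \<le> real (card (cell_nodes pos n m (i, j)))" using assms(6) by blast
  moreover have "\<forall>v\<in>cell_nodes pos n m (i, j). v \<noteq> u \<longrightarrow> disk_graph pos R u v"
  proof (intro ballI impI)
    fix v assume v: "v \<in> cell_nodes pos n m (i, j)" "v \<noteq> u"
    have "u < n" "v < n" "cell_of L m (pos v) = (i, j)"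
      using u assms(7) v(1) unfolding cell_nodes_def L_def by auto
    then show "disk_graph pos R u v"
      using disk_graph_same_cell[OF assms(2-4)] assms(5) cell_u v(2) by auto
  qed
  moreover have "cell_nodes pos n m (i, j) \<subseteq> {0..<n}" by (auto simp: cell_nodes_def)
  ultimately show ?thesis using nbhd_card_ge_cell[OF assms(7) u] by fastforce
qed

theorem mainTheorem5:
  fixes lam R :: real and n m :: nat and pos :: "nat \<Rightarrow> real \<times> real"
  assumes "lam \<ge> 1"
    and "0 < R" and "R \<le> sqrt (real n)"
    and "m = nat \<lceil>sqrt (5 * real n) / R\<rceil>"
    and "\<forall>v<n. fst (pos v) \<in> {0..sqrt (real n)} \<and> snd (pos v) \<in> {0..sqrt (real n)}"
    and "\<forall>i<m. \<forall>j<m. R\<^sup>2 / lam \<le> real (card (cell_nodes pos n m (i, j))) \<and>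
                        real (card (cell_nodes pos n m (i, j))) \<le> lam * R\<^sup>2"
  shows "\<forall>h::real. 1 \<le> h \<and> h \<le> (1 / (2 * lam)) * R\<^sup>2 \<longrightarrow>
           is_expander (disk_graph pos R) n h ((1 / (2 * lam)) * R\<^sup>2 / h)"
  unfolding is_expander_def
proof (intro allI impI)
  fix h :: real and I :: "nat set"
  assume h: "1 \<le> h \<and> h \<le> (1 / (2 * lam)) * R\<^sup>2" and I: "I \<subseteq> {0..<n}" "real (card I) \<le> h"
  define L where "L = sqrt (real n)"
  have "L > 0" using assms(2,3) unfolding L_def by linarith
  moreover have "m = nat \<lceil>sqrt 5 * L / R\<rceil>" using assms(4) by (simp add: L_def real_sqrt_mult)
  ultimately have m: "m \<ge> 1" and diag: "sqrt 2 * (L / real m) \<le> R"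
    using grid_resolution assms(2) by blast+
  show "(1 / (2 * lam)) * R\<^sup>2 / h * real (card I) \<le> real (card (nbhd (disk_graph pos R) n I))"
  proof (cases "I = {}")
    case False
    have "R\<^sup>2 / lam - real (card I) \<le> real (card (nbhd (disk_graph pos R) n I))"
      using dense_cells_nbhd_bound[where D = "R\<^sup>2 / lam"] \<open>L > 0\<close> m diag assms(5,6) I(1) False
      unfolding L_def by blast
    then have "2 * ((1 / (2 * lam)) * R\<^sup>2) - real (card I)
        \<le> real (card (nbhd (disk_graph pos R) n I))" by simp
    then show ?thesis by (rule expansion_from_deficit) (use I(2) h in auto)
  qed simp
qed

end
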